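(* Let $\pi_+\in(0,1)$, $\pi_-=1-\pi_+$, and let $p_+,p_-$ be probability densities on a feature space $\mathcal{X}$. Define $$\widetilde{p}_+(\boldsymbol{x})=\frac{\pi_+}{\pi_-^2+\pi_+}p_+(\boldsymbol{x})+\frac{\pi_-^2}{\pi_-^2+\pi_+}p_-(\boldsymbol{x}),\qquad \widetilde{p}_-(\boldsymbol{x})=\frac{\pi_+^2}{\pi_+^2+\pi_-}p_+(\boldsymbol{x})+\frac{\pi_-}{\pi_+^2+\pi_-}p_-(\boldsymbol{x}).$$ Then $$p_+(\boldsymbol{x})=\frac{1}{\pi_+}\big(\widetilde{p}_+(\boldsymbol{x})-\pi_-\widetilde{p}_-(\boldsymbol{x})\big),\qquad p_-(\boldsymbol{x})=\frac{1}{\pi_-}\big(\widetilde{p}_-(\boldsymbol{x})-\pi_+\widetilde{p}_+(\boldsymbol{x})\big).$$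
   Context: Here $\pi_+,\pi_-$ are the positive/negative class priors and $p_+,p_-$ the class-conditional densities of a binary classification problem; $\widetilde{p}_+,\widetilde{p}_-$ are the marginal densities of the first and second components of pairwise comparison data. *)

theory Defs
  imports "HOL-Analysis.Analysis"
begin

definition prob_density :: "'a measure \<Rightarrow> ('a \<Rightarrow> real) \<Rightarrow> bool" where
  "prob_density M p \<longleftrightarrow> p \<in> borel_measurable M \<and> (\<forall>x\<in>space M. 0 \<le> p x)
     \<and> integrable M p \<and> integral\<^sup>L M p = 1"

text \<open>Marginal densities of the two components of pairwise comparison data.\<close>
definition ptilde_pos :: "real \<Rightarrow> ('a \<Rightarrow> real) \<Rightarrow> ('a \<Rightarrow> real) \<Rightarrow> 'a \<Rightarrow> real" where
  "ptilde_pos \<pi>p pp pn x =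
     (let \<pi>n = 1 - \<pi>p in
      \<pi>p / (\<pi>n^2 + \<pi>p) * pp x + \<pi>n^2 / (\<pi>n^2 + \<pi>p) * pn x)"

definition ptilde_neg :: "real \<Rightarrow> ('a \<Rightarrow> real) \<Rightarrow> ('a \<Rightarrow> real) \<Rightarrow> 'a \<Rightarrow> real" where
  "ptilde_neg \<pi>p pp pn x =
     (let \<pi>n = 1 - \<pi>p in
      \<pi>p^2 / (\<pi>p^2 + \<pi>n) * pp x + \<pi>n / (\<pi>p^2 + \<pi>n) * pn x)"

end

theory Submission
  imports Defs
begin

text \<open>Both mixtures share the normaliser
  \<open>\<pi>\<^sub>-\<^sup>2 + \<pi>\<^sub>+ = \<pi>\<^sub>+\<^sup>2 + \<pi>\<^sub>- = 1 - \<pi>\<^sub>+\<pi>\<^sub>-\<close>, which is positive for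
  every real \<open>\<pi>\<^sub>+\<close>. After clearing it, subtracting \<open>\<pi>\<^sub>-\<close> times the second mixture
  from the first cancels the \<open>p\<^sub>-\<close> terms and leaves \<open>\<pi>\<^sub>+(1 - \<pi>\<^sub>+\<pi>\<^sub>-) p\<^sub>+\<close>;
  symmetrically for \<open>p\<^sub>-\<close>. The inversion is pointwise.\<close>

lemma one_minus_mult_one_minus_pos: "0 < 1 - p * (1 - p :: real)"
proof -
  have "1 - p * (1 - p) = (p - 1/2)\<^sup>2 + 3/4"
    by (simp add: power2_eq_square algebra_simps)
  then show ?thesis
    by (metis add_nonneg_pos zero_le_power2 zero_less_divide_iff zero_less_numeral)
qed

lemma ptilde_pos_eq:
  "ptilde_pos \<pi>p pp pn x = (\<pi>p * pp x + (1 - \<pi>p)\<^sup>2 * pn x) / (1 - \<pi>p * (1 - \<pi>p))"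
proof -
  have denominator: "(1 - \<pi>p)\<^sup>2 + \<pi>p = 1 - \<pi>p * (1 - \<pi>p)"
    by (simp add: power2_eq_square algebra_simps)
  show ?thesis
    unfolding ptilde_pos_def Let_def denominator by (simp only: add_divide_distrib times_divide_eq_left)
qed

lemma ptilde_neg_eq:
  "ptilde_neg \<pi>p pp pn x = (\<pi>p\<^sup>2 * pp x + (1 - \<pi>p) * pn x) / (1 - \<pi>p * (1 - \<pi>p))"
proof -
  have denominator: "\<pi>p\<^sup>2 + (1 - \<pi>p) = 1 - \<pi>p * (1 - \<pi>p)"
    by (simp add: power2_eq_square algebra_simps)
  show ?thesis
    unfolding ptilde_neg_def Let_def denominator by (simp only: add_divide_distrib times_divide_eq_left)
qed

lemma ptilde_pos_minus_ptilde_neg: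
  "ptilde_pos \<pi>p pp pn x - (1 - \<pi>p) * ptilde_neg \<pi>p pp pn x = \<pi>p * pp x"
proof -
  define D where "D = 1 - \<pi>p * (1 - \<pi>p)"
  have "D \<noteq> 0"
    using one_minus_mult_one_minus_pos[of \<pi>p] unfolding D_def by linarith
  have "ptilde_pos \<pi>p pp pn x - (1 - \<pi>p) * ptilde_neg \<pi>p pp pn x
      = (\<pi>p * pp x + (1 - \<pi>p)\<^sup>2 * pn x - (1 - \<pi>p) * (\<pi>p\<^sup>2 * pp x + (1 - \<pi>p) * pn x)) / D"
    unfolding ptilde_pos_eq ptilde_neg_eq D_def by (simp add: diff_divide_distrib)
  also have "\<dots> = D * (\<pi>p * pp x) / D"
    unfolding D_def by (simp add: power2_eq_square algebra_simps)
  also have "\<dots> = \<pi>p * pp x"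
    using \<open>D \<noteq> 0\<close> by simp
  finally show ?thesis .
qed

lemma ptilde_neg_minus_ptilde_pos:
  "ptilde_neg \<pi>p pp pn x - \<pi>p * ptilde_pos \<pi>p pp pn x = (1 - \<pi>p) * pn x"
proof -
  define D where "D = 1 - \<pi>p * (1 - \<pi>p)"
  have "D \<noteq> 0"
    using one_minus_mult_one_minus_pos[of \<pi>p] unfolding D_def by linarith
  have "ptilde_neg \<pi>p pp pn x - \<pi>p * ptilde_pos \<pi>p pp pn x
      = (\<pi>p\<^sup>2 * pp x + (1 - \<pi>p) * pn x - \<pi>p * (\<pi>p * pp x + (1 - \<pi>p)\<^sup>2 * pn x)) / D"
    unfolding ptilde_pos_eq ptilde_neg_eq D_def by (simp add: diff_divide_distrib)
  also have "\<dots> = D * ((1 - \<pi>p) * pn x) / D"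
    unfolding D_def by (simp add: power2_eq_square algebra_simps)
  also have "\<dots> = (1 - \<pi>p) * pn x"
    using \<open>D \<noteq> 0\<close> by simp
  finally show ?thesis .
qed

theorem lemma1:
  fixes M :: "'a measure" and \<pi>p \<pi>n :: real and pp pn :: "'a \<Rightarrow> real" and x :: 'a
  assumes "0 < \<pi>p" and "\<pi>p < 1" and "\<pi>n = 1 - \<pi>p"
    and "prob_density M pp" and "prob_density M pn"
  shows "pp x = 1 / \<pi>p * (ptilde_pos \<pi>p pp pn x - \<pi>n * ptilde_neg \<pi>p pp pn x)
       \<and> pn x = 1 / \<pi>n * (ptilde_neg \<pi>p pp pn x - \<pi>p * ptilde_pos \<pi>p pp pn x)"
  using assms(1-3) by (simp add: ptilde_pos_minus_ptilde_neg ptilde_neg_minus_ptilde_pos)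

end
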